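(* Let $\nu$ be a compactly supported probability measure on $\mathbb{R}$ with infinite support, let $\beta\in\mathbb{R}$, $\gamma>0$, and let $\mu = \Phi_{\beta,\gamma}[\nu]$. Let $\{P^\mu_n\}_{n\ge0}$ be the monic orthogonal polynomials of $\mu$. Then, for the operator \[ Q = L_\nu L_\mu - \gamma^{-1}(x - \beta) L_\mu \] on $\mathbb{R}[x]$, one has $Q[P^\mu_n] = -\gamma^{-1} P^\mu_n$ for all $n \ge 1$ (and $Q[P^\mu_0] = 0$). Equivalently, $Q[f] = \gamma^{-1}\bigl(-f + \int f\,d\mu\bigr)$ for every polynomial $f$.
   Context: $L_\mu[f](x) = \int \frac{f(x)-f(y)}{x-y}\,d\mu(y)$ on polynomials. For a probability measure $\nu$, $\beta\in\mathbb{R}$, $\gamma>0$, $\Phi_{\beta,\gamma}[\nu]$ is the probability measure $\mu$ with Cauchy transform $G_\mu(z) = 1/(z-\beta-\gamma G_\nu(z))$, where $G_\mu(z)=\int\frac{d\mu(x)}{z-x}$; equivalently, if $\nu$ has Jacobi parameters $(\beta_0,\beta_1,\dots),(\gamma_1,\gamma_2,\dots)$ (meaning its monic orthogonal polynomials satisfy $xP_n = P_{n+1}+\beta_nP_n+\gamma_nP_{n-1}$), then $\mu$ has Jacobi parameters $(\beta,\beta_0,\beta_1,\dots),(\gamma,\gamma_1,\gamma_2,\dots)$. *)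

theory Defs
  imports "HOL-Probability.Probability" "HOL-Computational_Algebra.Polynomial"
begin

definition msupport :: "real measure \<Rightarrow> real set" where
  "msupport M = {x. \<forall>e>0. emeasure M (ball x e) > 0}"

definition cauchy_transform :: "real measure \<Rightarrow> complex \<Rightarrow> complex" where
  "cauchy_transform M z = (\<integral>x. 1 / (z - complex_of_real x) \<partial>M)"

definition diff_quot :: "(real \<Rightarrow> real) \<Rightarrow> real \<Rightarrow> real \<Rightarrow> real" where
  "diff_quot f x y = (if x = y then deriv f x else (f x - f y) / (x - y))"

definition Lop :: "real measure \<Rightarrow> (real \<Rightarrow> real) \<Rightarrow> real \<Rightarrow> real" where
  "Lop M f x = (\<integral>y. diff_quot f x y \<partial>M)"

definition is_Phi :: "real \<Rightarrow> real \<Rightarrow> real measure \<Rightarrow> real measure \<Rightarrow> bool" where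
  "is_Phi \<beta> \<gamma> \<nu> \<mu> \<longleftrightarrow> prob_space \<mu> \<and> sets \<mu> = sets borel \<and>
     (\<forall>z. Im z \<noteq> 0 \<longrightarrow>
        cauchy_transform \<mu> z = 1 / (z - complex_of_real \<beta> - complex_of_real \<gamma> * cauchy_transform \<nu> z))"

definition monic_OP :: "real measure \<Rightarrow> nat \<Rightarrow> real poly" where
  "monic_OP M n = (THE p. degree p = n \<and> lead_coeff p = 1 \<and>
      (\<forall>q. degree q < n \<longrightarrow> (\<integral>x. poly p x * poly q x \<partial>M) = 0))"

end

theory Submission
  imports Defs
begin

(*
  Writing w = 1/z, the Cauchy identity
  G_mu(z) = 1/(z - beta - gamma G_nu(z)) becomes an identity of moment generating series,
  and comparing coefficients gives the moment recursion
     m_{k+1}(mu) = beta m_k(mu) + gamma sum_{j<k} m_j(nu) m_{k-1-j}(mu),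
  i.e. integral x g dmu = beta integral g dmu + gamma integral L_mu[g] dnu for polynomials g.
  Together with L_M[a + x g] = x L_M[g] + integral g dM this yields the operator identity by
  induction on f in Horner form.
*)

lemma deriv_poly: "deriv (poly p) x = poly (pderiv p) x"
  by (rule DERIV_imp_deriv[OF poly_DERIV])

lemma diff_quot_pCons:
  "diff_quot (poly (pCons a p)) y x = y * diff_quot (poly p) y x + poly p x"
proof (cases "x = y")
  case True
  then show ?thesis by (simp add: diff_quot_def deriv_poly pderiv_pCons)
next
  case False
  then show ?thesis by (simp add: diff_quot_def field_simps)
qed

lemma diff_quot_mult_root:
  assumes "poly p x = 0"
  shows "diff_quot (poly (p * h)) y x = poly h y * diff_quot (poly p) y x"
  using assms by (cases "x = y") (simp_all add: diff_quot_def deriv_poly pderiv_mult)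

lemma diff_quot_poly_expansion:
  "diff_quot (poly p) y x = (\<Sum>k\<le>degree p. coeff p k * (\<Sum>j<k. y^j * x^(k - Suc j)))"
proof (cases "x = y")
  case True
  have "poly p = (\<lambda>x. \<Sum>k\<le>degree p. coeff p k * x^k)"
    by (rule ext) (simp add: poly_altdef)
  moreover have "((\<lambda>x. \<Sum>k\<le>degree p. coeff p k * x^k) has_field_derivative
      (\<Sum>k\<le>degree p. coeff p k * (of_nat k * y^(k - 1)))) (at y)"
    by (intro DERIV_sum DERIV_cmult) (auto intro!: derivative_eq_intros)
  ultimately have "deriv (poly p) y = (\<Sum>k\<le>degree p. coeff p k * (of_nat k * y^(k - 1)))"
    using DERIV_imp_deriv by metis
  moreover have "(\<Sum>j<k. y^j * y^(k - Suc j)) = of_nat k * y^(k - 1)" for k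
    by (simp add: power_add[symmetric])
  ultimately show ?thesis using True by (simp add: diff_quot_def)
next
  case False
  have "poly p y - poly p x = (\<Sum>k\<le>degree p. coeff p k * (y^k - x^k))"
    by (simp add: poly_altdef sum_subtractf[symmetric] algebra_simps)
  also have "\<dots> = (y - x) * (\<Sum>k\<le>degree p. coeff p k * (\<Sum>j<k. y^j * x^(k - Suc j)))"
    by (simp add: power_diff_sumr2 sum_distrib_left algebra_simps)
  finally show ?thesis using False by (simp add: diff_quot_def)
qed


section \<open>Probability measures concentrated on a bounded interval\<close>

definition moment :: "real measure \<Rightarrow> nat \<Rightarrow> real" where
  "moment M k = (\<integral>x. x^k \<partial>M)"

locale bounded_prob = prob_space M for M :: "real measure" + fixes S :: real
  assumes sets_M: "sets M = sets borel"
    and AE_bounded: "AE x in M. \<bar>x\<bar> \<le> S"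
    and radius_nonneg: "0 \<le> S"
begin

lemma borel_measurable_M: "f \<in> borel_measurable borel \<Longrightarrow> f \<in> borel_measurable M"
  by (subst measurable_cong_sets[OF sets_M refl]) simp

lemma integrable_bounded_on_radius:
  fixes f :: "real \<Rightarrow> 'a::{banach,second_countable_topology}"
  assumes "f \<in> borel_measurable borel" "\<And>x. \<bar>x\<bar> \<le> S \<Longrightarrow> norm (f x) \<le> B"
  shows "integrable M f"
proof (rule integrable_const_bound[where B=B])
  show "AE x in M. norm (f x) \<le> B" using AE_bounded by eventually_elim (use assms in auto)
  show "f \<in> borel_measurable M" using borel_measurable_M[OF assms(1)] .
qed

lemma norm_integral_le_on_radius:
  fixes f :: "real \<Rightarrow> 'a::{banach,second_countable_topology}"
  assumes "integrable M f" "\<And>x. \<bar>x\<bar> \<le> S \<Longrightarrow> norm (f x) \<le> B"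
  shows "norm (integral\<^sup>L M f) \<le> B"
proof -
  have "norm (integral\<^sup>L M f) \<le> (\<integral>x. norm (f x) \<partial>M)" by (rule integral_norm_bound)
  also have "\<dots> \<le> (\<integral>x. B \<partial>M)"
    by (rule integral_mono_AE) (auto intro: AE_mp[OF AE_bounded] assms)
  also have "\<dots> = B" by (simp add: prob_space)
  finally show ?thesis .
qed

lemma integrable_continuous:
  fixes f :: "real \<Rightarrow> 'a::{banach,second_countable_topology}"
  assumes "continuous_on UNIV f"
  shows "integrable M f"
proof -
  have "compact (f ` cball 0 S)"
    by (rule compact_continuous_image) (use assms continuous_on_subset in auto)
  then obtain B where B: "\<forall>y\<in>f ` cball 0 S. norm y \<le> B"
    using compact_imp_bounded bounded_iff by metis
  show ?thesis
    by (rule integrable_bounded_on_radius[where B=B])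
       (use B assms borel_measurable_continuous_onI in auto)
qed

lemma moment_0: "moment M 0 = 1"
  by (simp add: moment_def prob_space)

text \<open>|m_k| <= S^k, so the moment generating series converges for |w| S < 1.\<close>
lemma moment_bound: "\<bar>moment M k\<bar> \<le> S^k"
proof -
  have "norm (moment M k) \<le> S^k"
    unfolding moment_def
    by (rule norm_integral_le_on_radius)
       (auto intro!: integrable_continuous continuous_intros simp: power_abs power_mono)
  then show ?thesis by simp
qed

lemma integral_monomial_sum:
  "(\<integral>x. (\<Sum>k\<in>I. c k * x^(e k)) \<partial>M) = (\<Sum>k\<in>I. c k * moment M (e k))"
  by (subst Bochner_Integration.integral_sum)
     (auto intro!: integrable_continuous continuous_intros simp: moment_def)

lemma integral_poly_moments:
  "(\<integral>x. poly g x \<partial>M) = (\<Sum>k\<le>degree g. coeff g k * moment M k)"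
  unfolding poly_altdef by (rule integral_monomial_sum)

lemma integral_x_poly_moments:
  "(\<integral>x. x * poly g x \<partial>M) = (\<Sum>k\<le>degree g. coeff g k * moment M (Suc k))"
proof -
  have "(\<lambda>x. x * poly g x) = (\<lambda>x. \<Sum>k\<le>degree g. coeff g k * x^(Suc k))"
    by (rule ext) (simp add: poly_altdef sum_distrib_left algebra_simps)
  then show ?thesis by (simp only: integral_monomial_sum)
qed

lemma Lop_poly_expansion:
  "Lop M (poly p) y = (\<Sum>k\<le>degree p. coeff p k * (\<Sum>j<k. y^j * moment M (k - Suc j)))"
proof -
  have "Lop M (poly p) y = (\<integral>x. (\<Sum>k\<le>degree p. \<Sum>j<k. (coeff p k * y^j) * x^(k - Suc j)) \<partial>M)"
    unfolding Lop_def diff_quot_poly_expansion by (simp add: sum_distrib_left mult.assoc)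
  also have "\<dots> = (\<Sum>k\<le>degree p. \<integral>x. (\<Sum>j<k. (coeff p k * y^j) * x^(k - Suc j)) \<partial>M)"
    by (rule Bochner_Integration.integral_sum) (auto intro!: integrable_continuous continuous_intros)
  finally show ?thesis
    by (simp only: integral_monomial_sum) (simp add: sum_distrib_left mult.assoc)
qed

lemma Lop_poly_is_poly: "\<exists>r. Lop M (poly p) = poly r"
proof
  let ?r = "\<Sum>k\<le>degree p. \<Sum>j<k. monom (coeff p k * moment M (k - Suc j)) j"
  show "Lop M (poly p) = poly ?r"
    by (rule ext) (simp add: Lop_poly_expansion poly_sum poly_monom sum_distrib_left algebra_simps)
qed

lemma Lop_pCons: "Lop M (poly (pCons a p)) y = y * Lop M (poly p) y + (\<integral>x. poly p x \<partial>M)"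
proof -
  have "(\<integral>x. y * diff_quot (poly p) y x + poly p x \<partial>M)
     = (\<integral>x. y * diff_quot (poly p) y x \<partial>M) + (\<integral>x. poly p x \<partial>M)"
    by (rule Bochner_Integration.integral_add)
       (auto intro!: integrable_continuous continuous_intros simp: diff_quot_poly_expansion)
  then show ?thesis unfolding Lop_def diff_quot_pCons by simp
qed

end

text \<open>The radius may be enlarged (to compare two measures on a common interval).\<close>
lemma bounded_prob_mono:
  assumes "bounded_prob M S" "S \<le> S'"
  shows "bounded_prob M S'"
proof -
  interpret bounded_prob M S by fact
  show ?thesis
    by unfold_locales (use sets_M AE_bounded radius_nonneg assms(2) in \<open>auto elim!: AE_mp\<close>)
qed


text \<open>A measure whose support lies in [-R, R] is concentrated there: the complement of the
  support is covered by countably many null balls with rational centres and radii.\<close>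
lemma AE_bounded_of_msupport:
  fixes M :: "real measure"
  assumes sM: "sets M = sets borel" and sub: "msupport M \<subseteq> cball 0 R"
  shows "AE x in M. \<bar>x\<bar> \<le> R"
proof -
  define I where "I = {(q,r). q \<in> \<rat> \<and> r \<in> \<rat> \<and> emeasure M (ball q r) = 0}"
  define N where "N = (\<Union>i\<in>I. ball (fst i) (snd i))"
  have "countable I"
    by (rule countable_subset[of _ "\<rat> \<times> \<rat>"]) (auto simp: I_def countable_rat)
  then have "N \<in> null_sets M"
    unfolding N_def by (rule null_sets_UN') (auto simp: I_def sM intro!: null_setsI)
  moreover have "{x \<in> space M. \<not> \<bar>x\<bar> \<le> R} \<subseteq> N"
  proof
    fix x assume "x \<in> {x \<in> space M. \<not> \<bar>x\<bar> \<le> R}"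
    then have "x \<notin> msupport M" using sub by auto
    then obtain e where e: "e > 0" "emeasure M (ball x e) = 0"
      unfolding msupport_def by (auto simp: zero_less_iff_neq_zero)
    obtain q where q: "q \<in> \<rat>" "x < q" "q < x + e/4"
      using Rats_dense_in_real[of x "x + e/4"] e by auto
    obtain r where r: "r \<in> \<rat>" "e/4 < r" "r < e/2"
      using Rats_dense_in_real[of "e/4" "e/2"] e by auto
    have "ball q r \<subseteq> ball x e"
      using q r by (auto simp: dist_real_def)
    then have "emeasure M (ball q r) \<le> emeasure M (ball x e)"
      by (rule emeasure_mono) (simp add: sM)
    then have "(q, r) \<in> I" using q r e by (simp add: I_def)
    moreover have "x \<in> ball q r" using q r by (auto simp: dist_real_def)
    ultimately show "x \<in> N" unfolding N_def by force
  qed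
  ultimately show ?thesis by (rule AE_I')
qed

lemma bounded_prob_of_compact_support:
  assumes "prob_space M" "sets M = sets borel" "compact (msupport M)"
  obtains S where "bounded_prob M S"
proof -
  obtain a where a: "\<forall>x\<in>msupport M. norm x \<le> a"
    using compact_imp_bounded[OF assms(3)] bounded_iff by blast
  have "msupport M \<subseteq> cball 0 \<bar>a\<bar>"
    using a by (force simp: dist_real_def)
  then have "AE x in M. \<bar>x\<bar> \<le> \<bar>a\<bar>"
    by (rule AE_bounded_of_msupport[OF assms(2)])
  then have "bounded_prob M \<bar>a\<bar>"
    by (intro bounded_prob.intro bounded_prob_axioms.intro assms(1,2)) auto
  then show ?thesis by (rule that)
qed

lemma msupport_subset_zeros:
  fixes M :: "real measure" and f :: "real \<Rightarrow> real"
  assumes sM: "sets M = sets borel" and f: "continuous_on UNIV f"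
    and AE0: "AE x in M. f x = 0"
  shows "msupport M \<subseteq> {x. f x = 0}"
proof
  fix y assume y: "y \<in> msupport M"
  define U where "U = {x. f x \<noteq> 0}"
  have openU: "open U" unfolding U_def by (rule open_Collect_neq) (use f in auto)
  have "emeasure M U = 0"
  proof -
    have "{x \<in> space M. \<not> f x = 0} = U"
      using sets_eq_imp_space_eq[OF sM] by (auto simp: U_def)
    then show ?thesis
      using AE_iff_measurable[of U M "\<lambda>x. f x = 0"] AE0 openU sM by simp
  qed
  show "y \<in> {x. f x = 0}"
  proof (rule ccontr)
    assume "y \<notin> {x. f x = 0}"
    then have "y \<in> U" by (simp add: U_def)
    then obtain e where e: "e > 0" "ball y e \<subseteq> U"
      using openU open_contains_ball by blast
    then have "emeasure M (ball y e) \<le> emeasure M U"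
      using openU sM by (intro emeasure_mono) auto
    with \<open>emeasure M U = 0\<close> y e(1) show False
      unfolding msupport_def by auto
  qed
qed


section \<open>The measure mu is compactly supported\<close>

text \<open>Off the real line the Cauchy kernel is bounded by 1/|Im z|, hence integrable.\<close>
lemma cauchy_kernel_integrable:
  fixes M :: "real measure"
  assumes "finite_measure M" "sets M = sets borel" "Im z \<noteq> 0"
  shows "integrable M (\<lambda>x. 1 / (z - complex_of_real x))"
proof (rule finite_measure.integrable_const_bound[OF assms(1), where B = "1 / \<bar>Im z\<bar>"])
  show "AE x in M. norm (1 / (z - complex_of_real x)) \<le> 1 / \<bar>Im z\<bar>"
  proof (intro AE_I2)
    fix x :: real
    have "\<bar>Im z\<bar> \<le> norm (z - complex_of_real x)"
      using abs_Im_le_cmod[of "z - complex_of_real x"] by simp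
    then show "norm (1 / (z - complex_of_real x)) \<le> 1 / \<bar>Im z\<bar>"
      using assms(3) by (simp add: norm_divide frac_le)
  qed
  have "continuous_on UNIV (\<lambda>x::real. 1 / (z - complex_of_real x))"
    using assms(3) by (intro continuous_intros) (auto simp: complex_eq_iff)
  then show "(\<lambda>x. 1 / (z - complex_of_real x)) \<in> borel_measurable M"
    using borel_measurable_continuous_onI measurable_cong_sets[OF assms(2) refl] by blast
qed

lemma Im_cauchy_transform:
  fixes M :: "real measure"
  assumes "finite_measure M" "sets M = sets borel" "\<epsilon> > 0"
  shows "Im (cauchy_transform M (Complex t \<epsilon>)) = - (\<integral>x. \<epsilon> / ((t - x)^2 + \<epsilon>^2) \<partial>M)"
    and "integrable M (\<lambda>x. \<epsilon> / ((t - x)^2 + \<epsilon>^2))"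
proof -
  let ?f = "\<lambda>x. 1 / (Complex t \<epsilon> - complex_of_real x)"
  have Im_f: "Im (?f x) = - (\<epsilon> / ((t - x)^2 + \<epsilon>^2))" for x
  proof -
    have "Complex t \<epsilon> - complex_of_real x = Complex (t - x) \<epsilon>"
      by (simp add: complex_eq_iff)
    then show ?thesis by (simp add: Im_divide)
  qed
  have int: "integrable M ?f"
    by (rule cauchy_kernel_integrable) (use assms in auto)
  show "Im (cauchy_transform M (Complex t \<epsilon>)) = - (\<integral>x. \<epsilon> / ((t - x)^2 + \<epsilon>^2) \<partial>M)"
    unfolding cauchy_transform_def
    using integral_bounded_linear[OF bounded_linear_Im int] by (simp add: Im_f)
  show "integrable M (\<lambda>x. \<epsilon> / ((t - x)^2 + \<epsilon>^2))"
    using integrable_bounded_linear[OF bounded_linear_Im int] by (simp add: Im_f)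
qed

text \<open>On cball t e the Poisson kernel e/((t - x)^2 + e^2) is at least 1/(2e); hence the
  mass of a ball is controlled by the Cauchy transform above its centre.\<close>
lemma measure_cball_le_Im_cauchy:
  fixes M :: "real measure"
  assumes fin: "finite_measure M" and sM: "sets M = sets borel" and e: "\<epsilon> > 0"
  shows "measure M (cball t \<epsilon>) \<le> 2 * \<epsilon> * \<bar>Im (cauchy_transform M (Complex t \<epsilon>))\<bar>"
proof -
  let ?P = "\<lambda>x. \<epsilon> / ((t - x)^2 + \<epsilon>^2)"
  note Im_G = Im_cauchy_transform[OF fin sM e]
  have "measure M (cball t \<epsilon>) = (\<integral>x. indicator (cball t \<epsilon>) x \<partial>M)"
    using sets_eq_imp_space_eq[OF sM] by simp
  also have "\<dots> \<le> (\<integral>x. 2 * \<epsilon> * ?P x \<partial>M)"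
  proof (rule integral_mono)
    show "integrable M (indicat_real (cball t \<epsilon>))"
      using fin sM by (intro integrable_real_indicator)
        (simp_all add: finite_measure.emeasure_finite less_top[symmetric])
    show "integrable M (\<lambda>x. 2 * \<epsilon> * ?P x)"
      using Im_G(2)[of t] by (rule integrable_mult_right)
    fix x
    show "indicat_real (cball t \<epsilon>) x \<le> 2 * \<epsilon> * ?P x"
    proof (cases "x \<in> cball t \<epsilon>")
      case True
      then have "\<bar>t - x\<bar> \<le> \<epsilon>" by (simp add: dist_real_def)
      then have "(t - x)^2 \<le> \<epsilon>^2"
        using power_mono[OF _ abs_ge_zero, of "t - x" \<epsilon> 2] by simp
      then have "(t - x)^2 + \<epsilon>^2 \<le> 2 * \<epsilon> * \<epsilon>" by (simp add: power2_eq_square)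
      moreover have "0 < (t - x)^2 + \<epsilon>^2" using e by (simp add: add_nonneg_pos)
      ultimately show ?thesis using True by (simp add: le_divide_eq)
    next
      case False
      then show ?thesis using e by (simp add: add_pos_nonneg)
    qed
  qed
  also have "\<dots> = 2 * \<epsilon> * (\<integral>x. ?P x \<partial>M)"
    by (rule integral_mult_right_zero)
  also have "\<dots> = 2 * \<epsilon> * \<bar>Im (cauchy_transform M (Complex t \<epsilon>))\<bar>"
    using e by (simp add: Im_G(1) integral_nonneg_AE add_pos_nonneg)
  finally show ?thesis .
qed

text \<open>If every ball of radius r centred in (a, b) has mass at most K r^2, then covering
  (a, b] by N intervals of length h = (b - a)/N shows its mass is at most N K (h/2)^2.\<close>
lemma interval_measure_le_subdivision:
  fixes M :: "real measure"
  assumes fin: "finite_measure M" and sM: "sets M = sets borel" and ab: "a < b"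
    and balls: "\<And>c r. a < c \<Longrightarrow> c < b \<Longrightarrow> 0 < r \<Longrightarrow> measure M (cball c r) \<le> K * r^2"
    and N1: "N \<ge> 1"
  shows "measure M {a<..b} \<le> K * (b - a)^2 / 4 / real N"
proof -
  define h where "h = (b - a) / N"
  have h0: "h > 0" using ab N1 by (simp add: h_def)
  have bN: "a + real N * h = b" using N1 by (simp add: h_def)
  define F where "F s = measure M {..s}" for s
  have F_diff: "F s' - F s = measure M {s<..s'}" if "s \<le> s'" for s s'
  proof -
    have "{s<..s'} = {..s'} - {..s}" by auto
    then show ?thesis
      using that by (simp add: F_def finite_measure.finite_measure_Diff[OF fin] sM)
  qed
  have "measure M {a<..b} = (\<Sum>i<N. F (a + real (Suc i) * h) - F (a + real i * h))"
    using F_diff[of a b] ab by (subst sum_lessThan_telescope) (simp add: bN)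
  also have "\<dots> \<le> (\<Sum>i<N. K * (h/2)^2)"
  proof (rule sum_mono)
    fix i assume i: "i \<in> {..<N}"
    define c where "c = a + (real i + 1/2) * h"
    have "F (a + real (Suc i) * h) - F (a + real i * h)
        = measure M {a + real i * h<..a + real (Suc i) * h}"
      using h0 by (intro F_diff) (simp add: algebra_simps)
    also have "\<dots> \<le> measure M (cball c (h/2))"
      by (rule finite_measure.finite_measure_mono[OF fin])
        (auto simp: sM c_def dist_real_def abs_le_iff field_simps)
    also have "\<dots> \<le> K * (h/2)^2"
    proof (rule balls)
      have "(real i + 1/2) * h < real N * h" using i h0 by (intro mult_strict_right_mono) auto
      then show "c < b" using bN by (simp add: c_def)
    qed (use h0 in \<open>simp_all add: c_def\<close>)
    finally show "F (a + real (Suc i) * h) - F (a + real i * h) \<le> K * (h/2)^2" .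
  qed
  also have "\<dots> = K * (b - a)^2 / 4 / real N"
    using N1 by (simp add: h_def power2_eq_square field_simps)
  finally show ?thesis .
qed

text \<open>Letting N tend to infinity: such an interval is null.\<close>
lemma interval_null_of_small_balls:
  fixes M :: "real measure"
  assumes "finite_measure M" "sets M = sets borel" "a < b"
    and "\<And>c r. a < c \<Longrightarrow> c < b \<Longrightarrow> 0 < r \<Longrightarrow> measure M (cball c r) \<le> K * r^2"
  shows "measure M {a<..b} = 0"
proof -
  let ?C = "K * (b - a)^2 / 4"
  have "(\<lambda>N. ?C / real (Suc N)) \<longlonglongrightarrow> 0"
    using LIMSEQ_Suc[OF lim_const_over_n[of ?C]] by simp
  then have "measure M {a<..b} \<le> 0"
    by (rule LIMSEQ_le_const)
       (use interval_measure_le_subdivision[OF assms] in \<open>auto simp del: of_nat_Suc\<close>)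
  then show ?thesis by (simp add: measure_le_0_iff)
qed

lemma Im_inverse_le:
  fixes D :: complex
  assumes "1 \<le> \<bar>Re D\<bar>" "0 < Im D"
  shows "\<bar>Im (1 / D)\<bar> \<le> Im D"
proof -
  have "1 \<le> (Re D)^2" using assms(1) abs_le_square_iff[of 1 "Re D"] by simp
  then have N1: "1 \<le> (Re D)^2 + (Im D)^2" by (simp add: add_increasing2)
  have "\<bar>Im (1 / D)\<bar> = Im D / ((Re D)^2 + (Im D)^2)"
    using assms(2) N1 by (simp add: Im_divide abs_divide cmod_power2)
  also have "\<dots> \<le> Im D / 1"
    by (rule divide_left_mono) (use assms N1 in auto)
  finally show ?thesis by simp
qed


locale phi_setting = nu: bounded_prob \<nu> S + mu: prob_space \<mu>
  for \<nu> S and \<mu> :: "real measure" + fixes \<beta> \<gamma> :: real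
  assumes sets_mu: "sets \<mu> = sets borel" and gamma_pos: "\<gamma> > 0"
    and cauchy_identity: "\<And>z. Im z \<noteq> 0 \<Longrightarrow> cauchy_transform \<mu> z
         = 1 / (z - complex_of_real \<beta> - complex_of_real \<gamma> * cauchy_transform \<nu> z)"
begin

text \<open>mu will turn out to be concentrated on [-T, T] with T = mu_radius.\<close>
definition mu_radius :: real where
  "mu_radius = S + \<bar>\<beta>\<bar> + \<gamma> + 2"

lemma cauchy_nu_far:
  assumes t: "S + 1 \<le> \<bar>t\<bar>" and e: "\<epsilon> > 0"
  shows "norm (cauchy_transform \<nu> (Complex t \<epsilon>)) \<le> 1"
    and "- \<epsilon> \<le> Im (cauchy_transform \<nu> (Complex t \<epsilon>))"
    and "Im (cauchy_transform \<nu> (Complex t \<epsilon>)) \<le> 0"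
proof -
  have fin: "finite_measure \<nu>" by unfold_locales
  note Im_G = Im_cauchy_transform[OF fin nu.sets_M e, of t]
  have far: "1 \<le> \<bar>t - x\<bar>" if "\<bar>x\<bar> \<le> S" for x
    using t that by linarith
  show "norm (cauchy_transform \<nu> (Complex t \<epsilon>)) \<le> 1"
    unfolding cauchy_transform_def
  proof (rule nu.norm_integral_le_on_radius)
    show "integrable \<nu> (\<lambda>x. 1 / (Complex t \<epsilon> - complex_of_real x))"
      by (rule cauchy_kernel_integrable) (use fin nu.sets_M e in auto)
    fix x :: real assume "\<bar>x\<bar> \<le> S"
    then have "1 \<le> \<bar>t - x\<bar>" by (rule far)
    also have "\<bar>t - x\<bar> \<le> norm (Complex t \<epsilon> - complex_of_real x)"
      using abs_Re_le_cmod[of "Complex t \<epsilon> - complex_of_real x"] by simp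
    finally show "norm (1 / (Complex t \<epsilon> - complex_of_real x)) \<le> 1"
      by (simp add: norm_divide divide_le_eq_1)
  qed
  have "norm (\<integral>x. \<epsilon> / ((t - x)^2 + \<epsilon>^2) \<partial>\<nu>) \<le> \<epsilon>"
  proof (rule nu.norm_integral_le_on_radius[OF Im_G(2)])
    fix x :: real assume "\<bar>x\<bar> \<le> S"
    then have "1 \<le> (t - x)^2 + \<epsilon>^2"
      using far abs_le_square_iff[of 1 "t - x"] by (simp add: add_increasing2)
    then show "norm (\<epsilon> / ((t - x)^2 + \<epsilon>^2)) \<le> \<epsilon>"
      using e by (simp add: divide_le_eq order_trans[OF _ mult_left_mono] add_pos_nonneg)
  qed
  then show "- \<epsilon> \<le> Im (cauchy_transform \<nu> (Complex t \<epsilon>))"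
    by (simp add: Im_G(1))
  show "Im (cauchy_transform \<nu> (Complex t \<epsilon>)) \<le> 0"
    using e by (simp add: Im_G(1) integral_nonneg_AE add_pos_nonneg)
qed

text \<open>Far out, the Cauchy identity makes |Im G_mu(t + i e)| = O(e).\<close>
lemma Im_cauchy_mu_far:
  assumes t: "mu_radius \<le> \<bar>t\<bar>" and e: "\<epsilon> > 0"
  shows "\<bar>Im (cauchy_transform \<mu> (Complex t \<epsilon>))\<bar> \<le> \<epsilon> * (1 + \<gamma>)"
proof -
  define G where "G = cauchy_transform \<nu> (Complex t \<epsilon>)"
  define D where "D = Complex t \<epsilon> - complex_of_real \<beta> - complex_of_real \<gamma> * G"
  have t1: "S + 1 \<le> \<bar>t\<bar>" using t gamma_pos by (simp add: mu_radius_def)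
  note G_bounds = cauchy_nu_far[OF t1 e, folded G_def]
  have "\<bar>\<gamma> * Re G\<bar> \<le> \<gamma>"
    using abs_Re_le_cmod[of G] G_bounds(1) gamma_pos by (simp add: abs_mult mult_left_le)
  then have Re_D: "1 \<le> \<bar>Re D\<bar>"
    using t nu.radius_nonneg by (simp add: D_def mu_radius_def)
  have "\<gamma> * Im G \<le> 0"
    using G_bounds(3) gamma_pos by (simp add: mult_nonneg_nonpos)
  moreover have "\<gamma> * (- \<epsilon>) \<le> \<gamma> * Im G"
    using G_bounds(2) gamma_pos by (intro mult_left_mono) auto
  ultimately have Im_D: "0 < Im D" "Im D \<le> \<epsilon> * (1 + \<gamma>)"
    using e by (simp_all add: D_def algebra_simps)
  have "cauchy_transform \<mu> (Complex t \<epsilon>) = 1 / D"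
    unfolding D_def G_def by (rule cauchy_identity) (use e in simp)
  then show ?thesis
    using Im_inverse_le[OF Re_D Im_D(1)] Im_D(2) by simp
qed

lemma measure_cball_far:
  assumes "mu_radius \<le> \<bar>t\<bar>" "\<epsilon> > 0"
  shows "measure \<mu> (cball t \<epsilon>) \<le> 2 * (1 + \<gamma>) * \<epsilon>^2"
proof -
  have fin: "finite_measure \<mu>" by unfold_locales
  have "measure \<mu> (cball t \<epsilon>) \<le> 2 * \<epsilon> * \<bar>Im (cauchy_transform \<mu> (Complex t \<epsilon>))\<bar>"
    by (rule measure_cball_le_Im_cauchy[OF fin sets_mu assms(2)])
  also have "\<dots> \<le> 2 * \<epsilon> * (\<epsilon> * (1 + \<gamma>))"
    using Im_cauchy_mu_far[OF assms] assms(2) by simp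
  finally show ?thesis by (simp add: power2_eq_square algebra_simps)
qed

text \<open>Hence mu gives no mass outside [-T, T]: the complement is a countable union of null
  half-open intervals.\<close>
lemma mu_AE_bounded: "AE x in \<mu>. \<bar>x\<bar> \<le> mu_radius"
proof -
  let ?T = mu_radius
  have T0: "0 \<le> ?T" using nu.radius_nonneg gamma_pos by (simp add: mu_radius_def)
  have fin: "finite_measure \<mu>" by unfold_locales
  have null: "{a<..b} \<in> null_sets \<mu>" if "a < b" "?T \<le> a \<or> b \<le> - ?T" for a b
  proof (rule null_setsI)
    have "measure \<mu> {a<..b} = 0"
    proof (rule interval_null_of_small_balls[OF fin sets_mu \<open>a < b\<close>])
      fix c r :: real assume "a < c" "c < b" "0 < r"
      then show "measure \<mu> (cball c r) \<le> 2 * (1 + \<gamma>) * r^2"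
        using that by (intro measure_cball_far) auto
    qed
    then show "emeasure \<mu> {a<..b} = 0" by (simp add: mu.emeasure_eq_measure)
  qed (simp add: sets_mu)
  define N where "N = (\<Union>n::nat. {?T<..?T + real n + 1} \<union> {- ?T - real n - 1<..- ?T})"
  have "N \<in> null_sets \<mu>"
    unfolding N_def by (intro null_sets_UN null_sets.Un null) (use T0 in auto)
  moreover have "{x \<in> space \<mu>. \<not> \<bar>x\<bar> \<le> ?T} \<subseteq> N"
  proof
    fix x assume "x \<in> {x \<in> space \<mu>. \<not> \<bar>x\<bar> \<le> ?T}"
    moreover obtain n :: nat where "\<bar>x\<bar> < real n" using reals_Archimedean2 by blast
    ultimately have "x \<in> {?T<..?T + real n + 1} \<union> {- ?T - real n - 1<..- ?T}"
      using T0 by auto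
    then show "x \<in> N" unfolding N_def by blast
  qed
  ultimately show ?thesis by (rule AE_I')
qed

lemma mu_bounded_prob: "bounded_prob \<mu> mu_radius"
  using mu_AE_bounded sets_mu nu.radius_nonneg gamma_pos
  by unfold_locales (simp_all add: mu_radius_def)

end


section \<open>The moment recursion for mu\<close>

text \<open>Pointwise remainder of the geometric series; for n = 0 a bound on 1/(1 - u).\<close>
lemma geometric_remainder_bound:
  fixes u :: complex
  assumes "norm u \<le> q" "q < 1"
  shows "norm (1 / (1 - u) - (\<Sum>k<n. u^k)) \<le> q^n / (1 - q)"
proof -
  have "u \<noteq> 1" using assms by auto
  then have eq: "1 / (1 - u) - (\<Sum>k<n. u^k) = u^n / (1 - u)"
    by (simp add: sum_gp_strict field_simps)
  have "1 - q \<le> norm (1 - u)"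
    using norm_triangle_ineq2[of 1 u] assms(1) by simp
  moreover have "0 \<le> q" using assms(1) norm_ge_zero[of u] by linarith
  ultimately have "norm (u^n / (1 - u)) \<le> q^n / (1 - q)"
    unfolding norm_divide norm_power using assms by (intro frac_le power_mono) auto
  then show ?thesis by (simp only: eq)
qed

context bounded_prob begin

lemma integral_geometric_partial_sum:
  fixes w :: complex
  shows "(\<integral>x. (\<Sum>k<n. (w * complex_of_real x)^k) \<partial>M) = (\<Sum>k<n. complex_of_real (moment M k) * w^k)"
proof -
  have "(\<integral>x. (w * complex_of_real x)^k \<partial>M) = complex_of_real (moment M k) * w^k" for k
  proof -
    have "(\<integral>x. (w * complex_of_real x)^k \<partial>M) = (\<integral>x. w^k * complex_of_real (x^k) \<partial>M)"
      by (simp add: power_mult_distrib)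
    also have "\<dots> = w^k * (\<integral>x. complex_of_real (x^k) \<partial>M)"
      by (rule integral_mult_right_zero)
    finally show ?thesis by (simp only: integral_complex_of_real moment_def mult.commute)
  qed
  then show ?thesis
    by (subst Bochner_Integration.integral_sum)
       (auto intro!: integrable_continuous continuous_intros)
qed

lemma moment_series_remainder:
  fixes w :: complex
  assumes q1: "norm w * S < 1"
  shows "norm ((\<integral>x. 1 / (1 - w * complex_of_real x) \<partial>M) - (\<Sum>k<n. complex_of_real (moment M k) * w^k))
         \<le> (norm w * S)^n / (1 - norm w * S)"
proof -
  let ?q = "norm w * S"
  have wx: "norm (w * complex_of_real x) \<le> ?q" if "\<bar>x\<bar> \<le> S" for x
    using that by (simp add: norm_mult mult_left_mono)
  have int_f: "integrable M (\<lambda>x. 1 / (1 - w * complex_of_real x))"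
  proof (rule integrable_bounded_on_radius)
    show "(\<lambda>x. 1 / (1 - w * complex_of_real x)) \<in> borel_measurable borel" by measurable
    fix x :: real assume "\<bar>x\<bar> \<le> S"
    then show "norm (1 / (1 - w * complex_of_real x)) \<le> ?q^0 / (1 - ?q)"
      using geometric_remainder_bound[OF wx q1, of x 0] by simp
  qed
  have int_s: "integrable M (\<lambda>x. \<Sum>k<n. (w * complex_of_real x)^k)"
    by (rule integrable_continuous) (intro continuous_intros)
  have "norm ((\<integral>x. 1 / (1 - w * complex_of_real x) \<partial>M) - (\<Sum>k<n. complex_of_real (moment M k) * w^k))
      = norm (\<integral>x. 1 / (1 - w * complex_of_real x) - (\<Sum>k<n. (w * complex_of_real x)^k) \<partial>M)"
    by (simp add: Bochner_Integration.integral_diff[OF int_f int_s] integral_geometric_partial_sum)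
  also have "\<dots> \<le> ?q^n / (1 - ?q)"
    using int_f int_s geometric_remainder_bound[OF wx q1]
    by (intro norm_integral_le_on_radius) auto
  finally show ?thesis .
qed

lemma moment_series_sums:
  fixes w :: complex
  assumes q1: "norm w * S < 1"
  shows "(\<lambda>k. complex_of_real (moment M k) * w^k) sums (\<integral>x. 1 / (1 - w * complex_of_real x) \<partial>M)"
proof -
  define s where "s = (\<integral>x. 1 / (1 - w * complex_of_real x) \<partial>M)"
  define P where "P n = (\<Sum>k<n. complex_of_real (moment M k) * w^k)" for n
  have q0: "0 \<le> norm w * S" using radius_nonneg by simp
  have "(\<lambda>n. s - P n) \<longlonglongrightarrow> 0"
  proof (rule Lim_null_comparison)
    show "\<forall>\<^sub>F n in sequentially. norm (s - P n) \<le> (norm w * S)^n / (1 - norm w * S)"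
      using moment_series_remainder[OF q1] by (simp add: s_def P_def)
    show "(\<lambda>n. (norm w * S)^n / (1 - norm w * S)) \<longlonglongrightarrow> 0"
      using q0 q1 by (intro tendsto_divide_zero LIMSEQ_power_zero) auto
  qed
  then have "(\<lambda>n. s - (s - P n)) \<longlonglongrightarrow> s - 0" by (intro tendsto_diff tendsto_const)
  then show ?thesis unfolding sums_def s_def P_def by simp
qed

text \<open>Absolute convergence, needed to multiply two such series (Cauchy product).\<close>
lemma moment_series_abs_summable:
  fixes w :: complex
  assumes "norm w * S < 1"
  shows "summable (\<lambda>k. norm (complex_of_real (moment M k) * w^k))"
proof (rule summable_comparison_test)
  show "\<exists>N. \<forall>n\<ge>N. norm (norm (complex_of_real (moment M n) * w^n)) \<le> (norm w * S)^n"
    using mult_right_mono[OF moment_bound, of "norm w ^ _"]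
    by (auto simp: norm_mult norm_power power_mult_distrib mult.commute)
  show "summable (\<lambda>n. (norm w * S)^n)"
    using assms radius_nonneg by (intro summable_geometric) simp
qed

text \<open>For |w| S < 1/2 the generating function stays within distance < 1 of m_0 = 1.\<close>
lemma moment_series_nonzero:
  fixes w :: complex
  assumes q2: "norm w * S < 1/2"
  shows "(\<integral>x. 1 / (1 - w * complex_of_real x) \<partial>M) \<noteq> 0"
proof
  assume zero: "(\<integral>x. 1 / (1 - w * complex_of_real x) \<partial>M) = 0"
  have "norm ((\<integral>x. 1 / (1 - w * complex_of_real x) \<partial>M) - (\<Sum>k<1. complex_of_real (moment M k) * w^k))
      \<le> (norm w * S)^1 / (1 - norm w * S)"
    by (rule moment_series_remainder) (use q2 in simp)
  then have "1 \<le> (norm w * S) / (1 - norm w * S)" using zero by (simp add: moment_0)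
  then have "1 - norm w * S \<le> norm w * S" using q2 by (simp add: le_divide_eq)
  then show False using q2 by linarith
qed

end

lemma cauchy_transform_reciprocal:
  assumes "w \<noteq> 0"
  shows "cauchy_transform M (1 / w) = w * (\<integral>x. 1 / (1 - w * complex_of_real x) \<partial>M)"
proof -
  have "1 / (1 / w - complex_of_real x) = w * (1 / (1 - w * complex_of_real x))" for x
  proof (cases "1 - w * complex_of_real x = 0")
    case True
    then have "1 / w - complex_of_real x = 0" using assms by (simp add: field_simps)
    then show ?thesis using True by simp
  next
    case False
    then show ?thesis using assms by (simp add: field_simps)
  qed
  then show ?thesis
    unfolding cauchy_transform_def by (simp only: integral_mult_right_zero)
qed

text \<open>Uniqueness of power series coefficients along a sequence of points tending to 0:
  inductively, if a_j = 0 for j < k, dividing by z^k and letting z -> 0 gives a_k = 0.\<close>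
lemma powser_coeffs_zero_of_vanishing:
  fixes a :: "nat \<Rightarrow> 'a::{real_normed_field,banach}"
  assumes sums: "\<And>n. (\<lambda>k. a k * z n ^ k) sums 0"
    and nonzero: "\<And>n. z n \<noteq> 0" and lim: "z \<longlonglongrightarrow> 0"
  shows "a k = 0"
proof (induction k rule: less_induct)
  case (less k)
  have shifted: "(\<lambda>i. a (i + k) * z n ^ i) sums 0" for n
  proof -
    have "\<And>i. i < k \<Longrightarrow> a i * z n ^ i = 0" using less.IH by simp
    then have "(\<lambda>i. a (i + k) * z n ^ (i + k)) sums 0"
      using sums[of n] sums_zero_iff_shift[of k "\<lambda>i. a i * z n ^ i" 0] by blast
    moreover have "a (i + k) * z n ^ (i + k) = z n ^ k * (a (i + k) * z n ^ i)" for i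
      by (simp add: power_add)
    ultimately have "(\<lambda>i. z n ^ k * (a (i + k) * z n ^ i)) sums 0" by simp
    from sums_mult_D[OF this] show ?thesis using nonzero[of n] by simp
  qed
  define P where "P u = (\<Sum>i. a (i + k) * u^i)" for u
  have "summable (\<lambda>i. a (i + k) * z 0 ^ i)" using shifted[of 0] by (simp add: sums_iff)
  then have "isCont P 0"
    unfolding P_def by (rule isCont_powser) (use nonzero[of 0] in simp)
  then have "(\<lambda>n. P (z n)) \<longlonglongrightarrow> P 0"
    using lim by (rule isCont_tendsto_compose)
  moreover have "P (z n) = 0" for n
    using shifted[of n] by (simp add: P_def sums_iff)
  ultimately have "(\<lambda>n. 0) \<longlonglongrightarrow> P 0" by simp
  then have "P 0 = 0" by (simp add: LIMSEQ_const_iff)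
  then show ?case by (simp add: P_def)
qed


locale phi_bounded = nu: bounded_prob \<nu> S + mu: bounded_prob \<mu> S
  for \<nu> \<mu> :: "real measure" and S :: real + fixes \<beta> \<gamma> :: real
  assumes gamma_pos: "\<gamma> > 0"
    and cauchy_identity: "\<And>z. Im z \<noteq> 0 \<Longrightarrow> cauchy_transform \<mu> z
         = 1 / (z - complex_of_real \<beta> - complex_of_real \<gamma> * cauchy_transform \<nu> z)"

lemma (in phi_setting) phi_bounded: "phi_bounded \<nu> \<mu> mu_radius \<beta> \<gamma>"
proof -
  have "S \<le> mu_radius"
    using nu.radius_nonneg gamma_pos by (simp add: mu_radius_def)
  then have "bounded_prob \<nu> mu_radius"
    by (rule bounded_prob_mono[OF nu.bounded_prob_axioms])
  then show ?thesis
    by (intro phi_bounded.intro phi_bounded_axioms.intro mu_bounded_prob gamma_pos cauchy_identity)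
qed

context phi_bounded
begin

definition moment_conv :: "nat \<Rightarrow> real" where
  "moment_conv k = (\<Sum>j<k. moment \<nu> j * moment \<mu> (k - Suc j))"

text \<open>Its generating series is w times the product of the two moment generating series
  (Cauchy product).\<close>
lemma moment_conv_series_sums:
  fixes w :: complex
  assumes q1: "norm w * S < 1"
  defines "A \<equiv> \<integral>x. 1 / (1 - w * complex_of_real x) \<partial>\<mu>"
    and "B \<equiv> \<integral>x. 1 / (1 - w * complex_of_real x) \<partial>\<nu>"
  shows "(\<lambda>k. complex_of_real (moment_conv k) * w^k) sums (w * B * A)"
proof -
  let ?a = "\<lambda>k. complex_of_real (moment \<nu> k) * w^k" and ?b = "\<lambda>k. complex_of_real (moment \<mu> k) * w^k"
  have "(\<lambda>k. \<Sum>i\<le>k. ?a i * ?b (k - i)) sums ((\<Sum>k. ?a k) * (\<Sum>k. ?b k))"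
    by (rule Cauchy_product_sums)
       (rule nu.moment_series_abs_summable[OF q1], rule mu.moment_series_abs_summable[OF q1])
  moreover have "(\<Sum>i\<le>k. ?a i * ?b (k - i)) = complex_of_real (moment_conv (Suc k)) * w^k" for k
  proof -
    have "(\<Sum>i\<le>k. ?a i * ?b (k - i)) = (\<Sum>i\<le>k. complex_of_real (moment \<nu> i * moment \<mu> (k - i)) * w^k)"
      by (intro sum.cong refl) (simp add: power_add[symmetric])
    then show ?thesis
      by (simp add: moment_conv_def lessThan_Suc_atMost sum_distrib_right)
  qed
  moreover have "(\<Sum>k. ?a k) = B" "(\<Sum>k. ?b k) = A"
    unfolding A_def B_def
    by (simp_all add: sums_unique[OF nu.moment_series_sums[OF q1], symmetric]
        sums_unique[OF mu.moment_series_sums[OF q1], symmetric])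
  ultimately have "(\<lambda>k. complex_of_real (moment_conv (Suc k)) * w^k) sums (B * A)" by simp
  from sums_mult[OF this, of w]
  have "(\<lambda>k. complex_of_real (moment_conv (Suc k)) * w^(Suc k)) sums (w * B * A)"
    by (simp add: algebra_simps)
  then show ?thesis by (subst (asm) sums_Suc_iff) (simp add: moment_conv_def)
qed

text \<open>Writing z = 1/w, the Cauchy identity becomes A (1 - beta w - gamma w^2 B) = 1 for the
  generating series A, B of mu and nu (here A <> 0 rules out a pole of the right-hand side).\<close>
lemma cauchy_identity_series_form:
  fixes w :: complex
  assumes w0: "w \<noteq> 0" and Im_w: "Im w \<noteq> 0" and small: "norm w * S < 1/2"
  defines "A \<equiv> \<integral>x. 1 / (1 - w * complex_of_real x) \<partial>\<mu>"
    and "B \<equiv> \<integral>x. 1 / (1 - w * complex_of_real x) \<partial>\<nu>"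
  shows "A * (1 - complex_of_real \<beta> * w - complex_of_real \<gamma> * w^2 * B) = 1"
proof -
  have "Im (1 / w) \<noteq> 0"
    using Im_w w0 by (simp add: Im_divide field_simps)
  define D where "D = 1 / w - complex_of_real \<beta> - complex_of_real \<gamma> * (w * B)"
  have wA: "w * A = 1 / D"
    using \<open>Im (1 / w) \<noteq> 0\<close> cauchy_identity[of "1 / w"]
    by (simp add: cauchy_transform_reciprocal[OF w0] A_def B_def D_def)
  moreover have "A \<noteq> 0" unfolding A_def by (rule mu.moment_series_nonzero[OF small])
  ultimately have "D \<noteq> 0" using w0 by auto
  with wA have "A * (w * D) = 1" by (simp add: field_simps)
  moreover have "w * D = 1 - complex_of_real \<beta> * w - complex_of_real \<gamma> * w^2 * B"
    using w0 by (simp add: D_def field_simps power2_eq_square)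
  ultimately show ?thesis by simp
qed

lemma moment_defect_series:
  fixes w :: complex
  assumes w0: "w \<noteq> 0" and Im_w: "Im w \<noteq> 0" and small: "norm w * S < 1/2"
  shows "(\<lambda>k. complex_of_real (moment \<mu> (Suc k) - \<beta> * moment \<mu> k - \<gamma> * moment_conv k) * w^k)
    sums 0"
proof -
  define A where "A = (\<integral>x. 1 / (1 - w * complex_of_real x) \<partial>\<mu>)"
  define B where "B = (\<integral>x. 1 / (1 - w * complex_of_real x) \<partial>\<nu>)"
  have q1: "norm w * S < 1" using small by simp
  have A_sums: "(\<lambda>k. complex_of_real (moment \<mu> k) * w^k) sums A"
    unfolding A_def by (rule mu.moment_series_sums[OF q1])
  have "(\<lambda>k. complex_of_real (moment \<mu> (Suc k)) * w^(Suc k)) sums (A - 1)"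
    using A_sums by (subst sums_Suc_iff) (simp add: mu.moment_0)
  from sums_divide[OF this, of w]
  have shifted: "(\<lambda>k. complex_of_real (moment \<mu> (Suc k)) * w^k) sums ((A - 1) / w)"
    using w0 by simp
  have "(\<lambda>k. complex_of_real (moment \<mu> (Suc k)) * w^k
           - complex_of_real \<beta> * (complex_of_real (moment \<mu> k) * w^k)
           - complex_of_real \<gamma> * (complex_of_real (moment_conv k) * w^k))
        sums ((A - 1) / w - complex_of_real \<beta> * A - complex_of_real \<gamma> * (w * B * A))"
    unfolding B_def A_def
    by (intro sums_diff sums_mult shifted[unfolded A_def] A_sums[unfolded A_def]
        moment_conv_series_sums q1)
  moreover have "(A - 1) / w - complex_of_real \<beta> * A - complex_of_real \<gamma> * (w * B * A)
      = (A * (1 - complex_of_real \<beta> * w - complex_of_real \<gamma> * w^2 * B) - 1) / w"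
    using w0 by (simp add: field_simps power2_eq_square)
  ultimately show ?thesis
    using cauchy_identity_series_form[OF assms, folded A_def B_def] by (simp add: algebra_simps)
qed

lemma moment_recursion:
  "moment \<mu> (Suc k) = \<beta> * moment \<mu> k + \<gamma> * (\<Sum>j<k. moment \<nu> j * moment \<mu> (k - Suc j))"
proof -
  define r where "r = 1 / (2 * S + 2)"
  have r0: "0 < r" and rS: "r * S < 1/2"
    using mu.radius_nonneg by (simp_all add: r_def add_nonneg_pos)
  define z where "z n = \<i> * complex_of_real (r / real (Suc n))" for n
  have z_small: "norm (z n) * S < 1/2" for n
  proof -
    have "norm (z n) = r / real (Suc n)" unfolding z_def norm_mult norm_of_real using r0 by simp
    also have "\<dots> \<le> r" using r0 by (simp add: divide_le_eq)
    finally have "norm (z n) * S \<le> r * S" using mu.radius_nonneg by (rule mult_right_mono)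
    then show ?thesis using rS by linarith
  qed
  have "Im (z n) = r / real (Suc n)" for n
    unfolding z_def by (simp only: Im_i_times Re_complex_of_real)
  then have Im_z: "Im (z n) \<noteq> 0" for n
    using r0 by simp
  then have z_nonzero: "z n \<noteq> 0" for n
    by (metis zero_complex.sel(2))
  have "z \<longlonglongrightarrow> \<i> * complex_of_real 0"
    unfolding z_def
    by (intro tendsto_mult tendsto_const tendsto_of_real LIMSEQ_Suc[OF lim_const_over_n])
  then have "complex_of_real (moment \<mu> (Suc k) - \<beta> * moment \<mu> k - \<gamma> * moment_conv k) = 0"
    using moment_defect_series[OF z_nonzero Im_z z_small] z_nonzero
    by (intro powser_coeffs_zero_of_vanishing[where z = z]) auto
  then have "moment \<mu> (Suc k) - \<beta> * moment \<mu> k - \<gamma> * moment_conv k = 0"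
    by (simp only: of_real_eq_0_iff)
  then show ?thesis by (simp add: moment_conv_def)
qed

end


section \<open>The operator identity\<close>

lemma Lop_const: "Lop M (\<lambda>_. c) y = 0"
proof -
  have "diff_quot (\<lambda>_. c) y = (\<lambda>x. 0)"
    by (rule ext) (simp add: diff_quot_def DERIV_imp_deriv[OF DERIV_const])
  then show ?thesis unfolding Lop_def by simp
qed

lemma Lop_poly_0: "Lop M (poly 0) y = 0"
proof -
  have "poly 0 = (\<lambda>_. 0 :: real)" by (rule ext) simp
  then show ?thesis by (simp only: Lop_const)
qed

context phi_bounded begin

lemma integral_Lop_mu:
  "(\<integral>y. Lop \<mu> (poly g) y \<partial>\<nu>) = (\<Sum>k\<le>degree g. coeff g k * moment_conv k)"
proof -
  have "(\<integral>y. Lop \<mu> (poly g) y \<partial>\<nu>)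
      = (\<integral>y. (\<Sum>k\<le>degree g. \<Sum>j<k. (coeff g k * moment \<mu> (k - Suc j)) * y^j) \<partial>\<nu>)"
    by (simp add: mu.Lop_poly_expansion sum_distrib_left algebra_simps)
  also have "\<dots> = (\<Sum>k\<le>degree g. \<integral>y. (\<Sum>j<k. (coeff g k * moment \<mu> (k - Suc j)) * y^j) \<partial>\<nu>)"
    by (rule Bochner_Integration.integral_sum)
       (rule nu.integrable_continuous, intro continuous_intros)
  finally show ?thesis
    by (simp only: nu.integral_monomial_sum) (simp add: moment_conv_def sum_distrib_left algebra_simps)
qed

lemma integral_x_poly:
  "(\<integral>x. x * poly g x \<partial>\<mu>) = \<beta> * (\<integral>x. poly g x \<partial>\<mu>) + \<gamma> * (\<integral>y. Lop \<mu> (poly g) y \<partial>\<nu>)"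
  unfolding mu.integral_x_poly_moments mu.integral_poly_moments integral_Lop_mu moment_recursion
  by (simp add: moment_conv_def sum_distrib_left sum.distrib algebra_simps)

text \<open>The main identity gamma L_nu L_mu[f] - (x - beta) L_mu[f] = -f + integral f dmu,
  by induction on f in Horner form f = a + x g: both sides transform alike under
  the recursion for L, and the constant terms match by the integral form of the
  moment recursion.\<close>
lemma operator_identity:
  "\<gamma> * Lop \<nu> (Lop \<mu> (poly f)) x - (x - \<beta>) * Lop \<mu> (poly f) x = - poly f x + (\<integral>y. poly f y \<partial>\<mu>)"
proof (induction f arbitrary: x rule: pCons_induct)
  case 0
  have "Lop \<mu> (\<lambda>_. 0) = (\<lambda>_. 0)"
    by (rule ext) (rule Lop_const)
  then show ?case by (simp add: Lop_const)
next
  case (pCons a g)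
  obtain r where r: "Lop \<mu> (poly g) = poly r" using mu.Lop_poly_is_poly by blast
  define c where "c = (\<integral>y. poly g y \<partial>\<mu>)"
  have L_mu: "Lop \<mu> (poly (pCons a g)) = poly (pCons c r)"
    by (rule ext) (simp add: mu.Lop_pCons r c_def)
  have L_nu_mu: "Lop \<nu> (Lop \<mu> (poly (pCons a g))) x
      = x * Lop \<nu> (Lop \<mu> (poly g)) x + (\<integral>y. Lop \<mu> (poly g) y \<partial>\<nu>)"
    unfolding L_mu r by (rule nu.Lop_pCons)
  have L_mu_x: "Lop \<mu> (poly (pCons a g)) x = x * Lop \<mu> (poly g) x + c"
    by (simp add: mu.Lop_pCons c_def)
  have "(\<integral>y. poly (pCons a g) y \<partial>\<mu>) = a + (\<integral>y. y * poly g y \<partial>\<mu>)"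
    by (simp add: Bochner_Integration.integral_add mu.prob_space
        mu.integrable_continuous continuous_intros)
  also have "\<dots> = a + \<beta> * c + \<gamma> * (\<integral>y. Lop \<mu> (poly g) y \<partial>\<nu>)"
    by (simp add: integral_x_poly c_def)
  finally have integral: "(\<integral>y. poly (pCons a g) y \<partial>\<mu>)
      = a + \<beta> * c + \<gamma> * (\<integral>y. Lop \<mu> (poly g) y \<partial>\<nu>)" .
  have "x * (\<gamma> * Lop \<nu> (Lop \<mu> (poly g)) x - (x - \<beta>) * Lop \<mu> (poly g) x) = x * (- poly g x + c)"
    using pCons.IH[of x] by (simp add: c_def)
  then show ?case
    unfolding L_nu_mu L_mu_x integral by (simp add: algebra_simps)
qed

end


section \<open>Positivity of the L^2(mu) inner product on polynomials\<close>

context bounded_prob begin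

lemma Lop_mult_null:
  assumes "AE x in M. poly p x = 0"
  shows "Lop M (poly (p * h)) y = poly h y * Lop M (poly p) y"
proof -
  have "Lop M (poly (p * h)) y = (\<integral>x. poly h y * diff_quot (poly p) y x \<partial>M)"
    unfolding Lop_def
  proof (rule integral_cong_AE)
    show "AE x in M. diff_quot (poly (p * h)) y x = poly h y * diff_quot (poly p) y x"
      using assms by eventually_elim (rule diff_quot_mult_root)
  qed (auto simp: diff_quot_poly_expansion
      intro!: borel_measurable_integrable integrable_continuous continuous_intros)
  then show ?thesis unfolding Lop_def by simp
qed

lemma AE_zero_of_integral_square:
  assumes "(\<integral>x. poly p x * poly p x \<partial>M) = 0"
  shows "AE x in M. poly p x = 0"
proof -
  have "AE x in M. poly p x * poly p x = 0"
    using assms by (subst (asm) integral_nonneg_eq_0_iff_AE)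
      (auto intro!: integrable_continuous continuous_intros)
  then show ?thesis by simp
qed

end

context phi_bounded begin

text \<open>If p vanishes mu-a.e. then so does L_mu[p] = r nu-a.e.: apply integral_x_poly to
  g = p r; both mu-integrals vanish and L_mu[p r] = r L_mu[p] = r^2, so integral r^2 dnu = 0.\<close>
lemma Lop_mu_of_null_poly:
  assumes AE_p: "AE x in \<mu>. poly p x = 0"
  shows "AE y in \<nu>. Lop \<mu> (poly p) y = 0"
proof -
  obtain r where r: "Lop \<mu> (poly p) = poly r" using mu.Lop_poly_is_poly by blast
  have "AE x in \<mu>. poly (p * r) x = 0" "AE x in \<mu>. x * poly (p * r) x = 0"
    using AE_p by auto
  then have "(\<integral>x. poly (p * r) x \<partial>\<mu>) = 0" "(\<integral>x. x * poly (p * r) x \<partial>\<mu>) = 0"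
    by (auto intro: integral_eq_zero_AE)
  with integral_x_poly[of "p * r"]
  have "\<gamma> * (\<integral>y. Lop \<mu> (poly (p * r)) y \<partial>\<nu>) = 0" by simp
  then have "(\<integral>y. poly r y * poly r y \<partial>\<nu>) = 0"
    using gamma_pos by (simp add: mu.Lop_mult_null[OF AE_p] r)
  then show ?thesis
    unfolding r by (rule nu.AE_zero_of_integral_square)
qed

text \<open>Since supp nu is infinite, a nonzero polynomial has positive L^2(mu) norm: otherwise
  L_mu[p] vanishes on supp nu, hence identically, and the operator identity forces p = 0.\<close>
lemma poly_square_integral_pos:
  assumes inf: "infinite (msupport \<nu>)" and p: "p \<noteq> 0"
  shows "(\<integral>x. poly p x * poly p x \<partial>\<mu>) > 0"
proof (rule ccontr)
  assume "\<not> ?thesis"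
  moreover have "0 \<le> (\<integral>x. poly p x * poly p x \<partial>\<mu>)" by (rule integral_nonneg_AE) simp
  ultimately have AE_p: "AE x in \<mu>. poly p x = 0"
    by (intro mu.AE_zero_of_integral_square) simp
  obtain r where r: "Lop \<mu> (poly p) = poly r" using mu.Lop_poly_is_poly by blast
  have "msupport \<nu> \<subseteq> {y. poly r y = 0}"
    using Lop_mu_of_null_poly[OF AE_p] unfolding r
    by (intro msupport_subset_zeros nu.sets_M) (auto intro: continuous_intros)
  then have "r = 0"
    using inf finite_subset poly_roots_finite by blast
  have "(\<integral>y. poly p y \<partial>\<mu>) = 0"
    using AE_p by (auto intro: integral_eq_zero_AE)
  then have "poly p x = 0" for x
    using operator_identity[of p x] \<open>r = 0\<close> r by (simp add: Lop_poly_0)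
  then show False
    using p poly_all_0_iff_0 by blast
qed

end


section \<open>Monic orthogonal polynomials\<close>

definition poly_inner :: "real measure \<Rightarrow> real poly \<Rightarrow> real poly \<Rightarrow> real" where
  "poly_inner M p q = (\<integral>x. poly p x * poly q x \<partial>M)"

definition is_monic_OP :: "real measure \<Rightarrow> nat \<Rightarrow> real poly \<Rightarrow> bool" where
  "is_monic_OP M n p \<longleftrightarrow> degree p = n \<and> lead_coeff p = 1 \<and> (\<forall>q. degree q < n \<longrightarrow> poly_inner M p q = 0)"

lemma monic_OP_is_The: "monic_OP M n = (THE p. is_monic_OP M n p)"
  unfolding monic_OP_def is_monic_OP_def poly_inner_def ..

context bounded_prob begin

lemma poly_inner_commute: "poly_inner M p q = poly_inner M q p"
  by (simp add: poly_inner_def mult.commute)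

lemma poly_inner_diff_left: "poly_inner M (p - q) g = poly_inner M p g - poly_inner M q g"
  unfolding poly_inner_def
  by (simp add: left_diff_distrib Bochner_Integration.integral_diff
      integrable_continuous continuous_intros)

lemma poly_inner_add_right: "poly_inner M f (p + q) = poly_inner M f p + poly_inner M f q"
  unfolding poly_inner_def
  by (simp add: distrib_left Bochner_Integration.integral_add
      integrable_continuous continuous_intros)

lemma poly_inner_smult_right: "poly_inner M f (smult a p) = a * poly_inner M f p"
  unfolding poly_inner_def by (simp add: algebra_simps)

lemma poly_inner_sum_left:
  "poly_inner M (\<Sum>k\<in>I. smult (c k) (P k)) g = (\<Sum>k\<in>I. c k * poly_inner M (P k) g)"
  unfolding poly_inner_def poly_sum poly_smult sum_distrib_right
  by (subst Bochner_Integration.integral_sum)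
     (auto simp: mult.assoc intro!: integrable_continuous continuous_intros)

text \<open>Orthogonality to monic polynomials of every degree j <= n implies orthogonality to
  every polynomial of degree <= n (subtract the leading term and induct on the degree).\<close>
lemma orthogonal_to_degree_le:
  assumes P: "\<And>k. k \<le> n \<Longrightarrow> degree (P k) = k \<and> lead_coeff (P k) = 1"
    and orth: "\<And>j. j \<le> n \<Longrightarrow> poly_inner M f (P j) = 0"
  shows "degree q \<le> n \<Longrightarrow> poly_inner M f q = 0"
proof (induction "degree q" arbitrary: q rule: less_induct)
  case less
  define d where "d = degree q"
  define q' where "q' = q - smult (lead_coeff q) (P d)"
  have "d \<le> n" using less.prems by (simp add: d_def)
  then have Pd: "degree (P d) = d" "lead_coeff (P d) = 1"
    using P by blast+
  have "poly_inner M f q' = 0"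
  proof (cases "q' = 0")
    case True then show ?thesis by (simp add: poly_inner_def)
  next
    case False
    have "degree q' \<le> d"
      unfolding q'_def using Pd(1) degree_smult_le[of "lead_coeff q" "P d"]
      by (intro degree_diff_le) (auto simp: d_def)
    moreover have "coeff q' d = 0" using Pd by (simp add: q'_def d_def)
    ultimately have "degree q' < degree q"
      using False by (metis d_def le_neq_implies_less leading_coeff_0_iff)
    then show ?thesis using less.hyps less.prems by simp
  qed
  moreover have "poly_inner M f q = poly_inner M f (q' + smult (lead_coeff q) (P d))"
    by (simp add: q'_def)
  moreover have "\<dots> = poly_inner M f q' + lead_coeff q * poly_inner M f (P d)"
    by (simp add: poly_inner_add_right poly_inner_smult_right)
  ultimately show ?case
    using orth[OF \<open>d \<le> n\<close>] by simp
qed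

lemma monic_OPs_orthogonal:
  assumes "is_monic_OP M k p" "is_monic_OP M j q" "k \<noteq> j"
  shows "poly_inner M p q = 0"
proof (cases "j < k")
  case True
  then show ?thesis using assms(1,2) by (simp add: is_monic_OP_def)
next
  case False
  then have "poly_inner M q p = 0" using assms by (simp add: is_monic_OP_def)
  then show ?thesis by (simp add: poly_inner_commute)
qed

text \<open>Gram-Schmidt step: given monic OPs P_0, ..., P_n of a positive definite inner product,
  P_{n+1} = x^{n+1} - sum_{k<=n} <x^{n+1}, P_k>/<P_k, P_k> P_k is the next one.\<close>
lemma gram_schmidt_step:
  assumes pos: "\<And>p. p \<noteq> 0 \<Longrightarrow> poly_inner M p p > 0"
    and P: "\<And>k. k \<le> n \<Longrightarrow> is_monic_OP M k (P k)"
  defines "c k \<equiv> poly_inner M (monom 1 (Suc n)) (P k) / poly_inner M (P k) (P k)"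
  shows "is_monic_OP M (Suc n) (monom 1 (Suc n) - (\<Sum>k\<le>n. smult (c k) (P k)))"
proof -
  define s where "s = (\<Sum>k\<le>n. smult (c k) (P k))"
  define Pn where "Pn = monom 1 (Suc n) - s"
  have "degree s \<le> n"
    unfolding s_def
  proof (rule degree_sum_le)
    fix k assume "k \<in> {..n}"
    then show "degree (smult (c k) (P k)) \<le> n"
      using degree_smult_le[of "c k" "P k"] P[of k] by (simp add: is_monic_OP_def)
  qed simp
  then have deg_Pn: "degree Pn = Suc n"
    unfolding Pn_def using degree_add_eq_left[of "- s" "monom 1 (Suc n)"]
    by (simp add: degree_monom_eq)
  have "coeff s (Suc n) = 0"
    using \<open>degree s \<le> n\<close> by (intro coeff_eq_0) simp
  then have lead_Pn: "lead_coeff Pn = 1"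
    using deg_Pn by (simp add: Pn_def)
  have Pn_orth: "poly_inner M Pn (P j) = 0" if j: "j \<le> n" for j
  proof -
    have "P j \<noteq> 0" using P[OF j] by (auto simp: is_monic_OP_def)
    have "poly_inner M s (P j) = (\<Sum>k\<le>n. c k * poly_inner M (P k) (P j))"
      unfolding s_def by (rule poly_inner_sum_left)
    also have "\<dots> = c j * poly_inner M (P j) (P j)"
    proof -
      have "poly_inner M (P k) (P j) = 0" if "k \<le> n" "k \<noteq> j" for k
        using monic_OPs_orthogonal[OF P[OF that(1)] P[OF j] that(2)] .
      then show ?thesis using j by (subst sum.remove[of _ j]) auto
    qed
    also have "\<dots> = poly_inner M (monom 1 (Suc n)) (P j)"
      using pos[OF \<open>P j \<noteq> 0\<close>] by (simp add: c_def)
    finally show ?thesis unfolding Pn_def by (simp add: poly_inner_diff_left)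
  qed
  have "poly_inner M Pn q = 0" if "degree q < Suc n" for q
  proof (rule orthogonal_to_degree_le[where n = n and P = P])
    show "degree (P k) = k \<and> lead_coeff (P k) = 1" if "k \<le> n" for k
      using P[OF that] unfolding is_monic_OP_def by blast
  qed (use Pn_orth that in auto)
  then show ?thesis
    using deg_Pn lead_Pn by (simp add: is_monic_OP_def Pn_def s_def)
qed

lemma monic_OPs_exist:
  assumes pos: "\<And>p. p \<noteq> 0 \<Longrightarrow> poly_inner M p p > 0"
  shows "\<exists>P. \<forall>k\<le>n. is_monic_OP M k (P k)"
proof (induction n)
  case 0
  show ?case by (rule exI[of _ "\<lambda>_. 1"]) (auto simp: is_monic_OP_def)
next
  case (Suc n)
  then obtain P where P: "\<And>k. k \<le> n \<Longrightarrow> is_monic_OP M k (P k)" by blast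
  obtain Pn where "is_monic_OP M (Suc n) Pn"
    using gram_schmidt_step[OF pos P] by blast
  then have "\<forall>k\<le>Suc n. is_monic_OP M k ((P(Suc n := Pn)) k)"
    using P by (simp add: le_Suc_eq)
  then show ?case by blast
qed

text \<open>Uniqueness: the difference of two monic OPs of degree n has lower degree and is
  orthogonal to itself.\<close>
lemma monic_OP_unique:
  assumes pos: "\<And>p. p \<noteq> 0 \<Longrightarrow> poly_inner M p p > 0"
    and "is_monic_OP M n p1" "is_monic_OP M n p2"
  shows "p1 = p2"
proof (rule ccontr)
  assume "p1 \<noteq> p2"
  define d where "d = p1 - p2"
  have "d \<noteq> 0" using \<open>p1 \<noteq> p2\<close> by (simp add: d_def)
  have "degree d \<le> n" "coeff d n = 0"
    using assms(2,3) unfolding d_def is_monic_OP_def by (auto intro: degree_diff_le)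
  then have "degree d < n"
    using \<open>d \<noteq> 0\<close> by (metis le_neq_implies_less leading_coeff_0_iff)
  then have "poly_inner M d d = 0"
    using assms(2,3) by (simp add: d_def is_monic_OP_def poly_inner_diff_left)
  then show False using pos[OF \<open>d \<noteq> 0\<close>] by simp
qed

lemma monic_OP_is_monic_OP:
  assumes pos: "\<And>p. p \<noteq> 0 \<Longrightarrow> poly_inner M p p > 0"
  shows "is_monic_OP M n (monic_OP M n)"
proof -
  obtain P where "\<forall>k\<le>n. is_monic_OP M k (P k)"
    using monic_OPs_exist[OF pos] by blast
  then have "\<exists>!p. is_monic_OP M n p"
    using monic_OP_unique[OF pos] by blast
  then show ?thesis unfolding monic_OP_is_The by (rule theI')
qed

lemma monic_OP_0:
  assumes "\<And>p. p \<noteq> 0 \<Longrightarrow> poly_inner M p p > 0"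
  shows "monic_OP M 0 = 1"
  using monic_OP_is_monic_OP[OF assms, of 0]
  by (auto simp: is_monic_OP_def elim!: degree_eq_zeroE)

lemma integral_monic_OP:
  assumes "\<And>p. p \<noteq> 0 \<Longrightarrow> poly_inner M p p > 0" and "n \<ge> 1"
  shows "(\<integral>x. poly (monic_OP M n) x \<partial>M) = 0"
  using monic_OP_is_monic_OP[OF assms(1), of n] assms(2)
  by (auto simp: is_monic_OP_def poly_inner_def dest!: spec[of _ 1])

end


theorem proposition4p4:
  fixes \<nu> \<mu> :: "real measure" and \<beta> \<gamma> :: real
  assumes "prob_space \<nu>" and "sets \<nu> = sets borel"
    and "compact (msupport \<nu>)" and "infinite (msupport \<nu>)"
    and "\<gamma> > 0"
    and "is_Phi \<beta> \<gamma> \<nu> \<mu>"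
  defines "Q \<equiv> (\<lambda>f x. Lop \<nu> (Lop \<mu> f) x - (x - \<beta>) / \<gamma> * Lop \<mu> f x)"
  shows "(\<forall>n\<ge>1. \<forall>x. Q (poly (monic_OP \<mu> n)) x = - poly (monic_OP \<mu> n) x / \<gamma>)
       \<and> (\<forall>x. Q (poly (monic_OP \<mu> 0)) x = 0)
       \<and> (\<forall>f :: real poly. \<forall>x. Q (poly f) x = (- poly f x + (\<integral>y. poly f y \<partial>\<mu>)) / \<gamma>)"
proof -
  have mu_prob: "prob_space \<mu>" and mu_sets: "sets \<mu> = sets borel"
    and identity: "\<And>z. Im z \<noteq> 0 \<Longrightarrow> cauchy_transform \<mu> z
         = 1 / (z - complex_of_real \<beta> - complex_of_real \<gamma> * cauchy_transform \<nu> z)"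
    using assms(6) unfolding is_Phi_def by auto
  obtain S where nu_bounded: "bounded_prob \<nu> S"
    using bounded_prob_of_compact_support assms(1-3) by blast
  interpret phi_setting \<nu> S \<mu> \<beta> \<gamma>
    by (intro phi_setting.intro phi_setting_axioms.intro nu_bounded mu_prob mu_sets assms(5) identity)
  interpret B: phi_bounded \<nu> \<mu> mu_radius \<beta> \<gamma> by (rule phi_bounded)
  have Q_poly: "Q (poly f) x = (- poly f x + (\<integral>y. poly f y \<partial>\<mu>)) / \<gamma>" for f x
    using B.operator_identity[of f x] gamma_pos by (simp add: Q_def field_simps)
  have pos: "\<And>p. p \<noteq> 0 \<Longrightarrow> poly_inner \<mu> p p > 0"
    unfolding poly_inner_def by (rule B.poly_square_integral_pos[OF assms(4)])
  have "Q (poly (monic_OP \<mu> 0)) x = 0" for x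
  proof -
    have "poly (1 :: real poly) = (\<lambda>_. 1)" by (rule ext) simp
    then have "Q (poly 1) x = (- 1 + (\<integral>y. 1 \<partial>\<mu>)) / \<gamma>"
      using Q_poly[of 1 x] by simp
    then show ?thesis by (simp add: B.mu.monic_OP_0[OF pos] mu.prob_space)
  qed
  then show ?thesis
    using Q_poly B.mu.integral_monic_OP[OF pos] by simp
qed

end
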